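(* Let $w=(w_0,\dots,w_l)$ with $w_0$ a positive integer, $w_1,\dots,w_l$ nonnegative integers and $w_0\ge\cdots\ge w_l$. For a graph $G$ of order at least three, $\gamma_{(w_0,\dots,w_l)}(G)=2$ if and only if one of the following holds: (i) $w_2=0$, $\gamma(G)=1$, and either $w_0=2$ or $w_0=w_1=1$; (ii) $w_0=1$, $w_1=0$ and $\gamma(G)=2$; (iii) $w_0=1$, $w_1=1$ and $\gamma_t(G)=2$; (iv) $w_0=2$, $w_1=0$ and $\gamma_2(G)=2$; (v) $w_0=2$, $w_1=1$ and $\gamma_{\times 2}(G)=2$.
   Context: All graphs are finite and simple; $N(v)$ denotes the open neighbourhood and $N[v]=N(v)\cup\{v\}$. For a vector $w=(w_0,\dots,w_l)$ of nonnegative integers with $w_0\ge1$, a function $f:V(G)\to\{0,\dots,l\}$ is a $w$-dominating function if $\sum_{u\in N(v)}f(u)\ge w_i$ for every vertex $v$ with $f(v)=i$. The weight is $\omega(f)=\sum_v f(v)$, and $\gamma_w(G)$ is the minimum weight of a $w$-dominating function on $G$. $\gamma(G)$ is the domination number and $\gamma_t(G)$ the total domination number (minimum size of $S$ with every vertex having a neighbour in $S$). $\gamma_2(G)$ is the minimum size of $S\subseteq V(G)$ such that every vertex not in $S$ has at least two neighbours in $S$. $\gamma_{\times2}(G)$ (double domination number) is the minimum size of $S\subseteq V(G)$ such that $|N[v]\cap S|\ge 2$ for every $v\in V(G)$. *)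

theory Defs
  imports Main "HOL-Library.Extended_Nat"
begin

definition simple_graph :: "'a set \<Rightarrow> ('a \<Rightarrow> 'a \<Rightarrow> bool) \<Rightarrow> bool" where
  "simple_graph V E \<longleftrightarrow> finite V \<and> (\<forall>u v. E u v \<longrightarrow> E v u) \<and> (\<forall>v. \<not> E v v)
     \<and> (\<forall>u v. E u v \<longrightarrow> u \<in> V \<and> v \<in> V)"

definition nbhd :: "'a set \<Rightarrow> ('a \<Rightarrow> 'a \<Rightarrow> bool) \<Rightarrow> 'a \<Rightarrow> 'a set" where
  "nbhd V E v = {u \<in> V. E v u}"

text \<open>w = [w_0,...,w_l] is a list of length l+1; f takes values in {0..l}.\<close>
definition w_dominating :: "'a set \<Rightarrow> ('a \<Rightarrow> 'a \<Rightarrow> bool) \<Rightarrow> nat list \<Rightarrow> ('a \<Rightarrow> nat) \<Rightarrow> bool" where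
  "w_dominating V E w f \<longleftrightarrow>
     (\<forall>v\<in>V. f v < length w \<and> (\<Sum>u\<in>nbhd V E v. f u) \<ge> w ! (f v))"

text \<open>Minimum weight; infinity if no w-dominating function exists.\<close>
definition gamma_w :: "'a set \<Rightarrow> ('a \<Rightarrow> 'a \<Rightarrow> bool) \<Rightarrow> nat list \<Rightarrow> enat" where
  "gamma_w V E w = (INF f \<in> {f. w_dominating V E w f}. enat (\<Sum>v\<in>V. f v))"

definition dom_number :: "'a set \<Rightarrow> ('a \<Rightarrow> 'a \<Rightarrow> bool) \<Rightarrow> enat" where
  "dom_number V E = (INF S \<in> {S. S \<subseteq> V \<and> (\<forall>v\<in>V. v \<in> S \<or> (\<exists>u\<in>S. E v u))}. enat (card S))"

definition total_dom_number :: "'a set \<Rightarrow> ('a \<Rightarrow> 'a \<Rightarrow> bool) \<Rightarrow> enat" where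
  "total_dom_number V E = (INF S \<in> {S. S \<subseteq> V \<and> (\<forall>v\<in>V. \<exists>u\<in>S. E v u)}. enat (card S))"

definition two_dom_number :: "'a set \<Rightarrow> ('a \<Rightarrow> 'a \<Rightarrow> bool) \<Rightarrow> enat" where
  "two_dom_number V E = (INF S \<in> {S. S \<subseteq> V \<and> (\<forall>v\<in>V - S. card (nbhd V E v \<inter> S) \<ge> 2)}. enat (card S))"

definition double_dom_number :: "'a set \<Rightarrow> ('a \<Rightarrow> 'a \<Rightarrow> bool) \<Rightarrow> enat" where
  "double_dom_number V E = (INF S \<in> {S. S \<subseteq> V \<and> (\<forall>v\<in>V. card (insert v (nbhd V E v) \<inter> S) \<ge> 2)}. enat (card S))"

end

theory Submission
  imports Defs
begin

text \<open>
  A w-dominating function of weight 1 is the indicator of a vertex, and one of weight 2 is twice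
  the indicator of a vertex or the indicator of a 2-set. The indicator of a nonempty set S is
  w-dominating iff every vertex outside S has at least w_0 neighbours in S and every vertex of S
  at least w_1; call such an S (w_0, w_1)-dominating. The (1,0)-, (1,1)-, (2,0)- and
  (2,1)-dominating sets are the dominating, total dominating, 2-dominating and double dominating
  sets, so all four domination parameters are minimum sizes of (p,q)-dominating sets. On at least
  three vertices a (p,q)-dominating 2-set forces p \<le> 2 and q \<le> 1, a (p,q)-dominating
  singleton forces (p,q) = (1,0), and twice the indicator of a vertex is w-dominating iff
  w_2 = 0, w_0 \<le> 2 and the vertex is adjacent to all others; the theorem follows by comparing
  these configurations for each value of (w_0, w_1).
\<close>

lemma INF_enat_eq_iff:
  "(INF x\<in>A. enat (g x)) = enat n \<longleftrightarrow> (\<exists>x\<in>A. g x = n) \<and> (\<forall>x\<in>A. n \<le> g x)"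
proof
  assume inf: "(INF x\<in>A. enat (g x)) = enat n"
  then have "A \<noteq> {}" by (auto simp: top_enat_def)
  then obtain x where x: "x \<in> A" "\<forall>y\<in>A. g x \<le> g y"
    using ex_has_least_nat[of "\<lambda>x. x \<in> A" _ g] by blast
  then have "(INF x\<in>A. enat (g x)) = enat (g x)"
    by (intro antisym INF_lower INF_greatest) auto
  with inf x show "(\<exists>x\<in>A. g x = n) \<and> (\<forall>x\<in>A. n \<le> g x)" by auto
qed (auto intro!: antisym INF_greatest intro: INF_lower2)

lemma sum_nat_eq_1E:
  fixes f :: "'a \<Rightarrow> nat"
  assumes "finite A" "sum f A = 1"
  obtains a where "a \<in> A" "\<forall>x\<in>A. f x = of_bool (x = a)"
proof -
  obtain a where a: "a \<in> A" "f a \<noteq> 0" using assms by (metis sum.neutral zero_neq_one)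
  have "f a + sum f (A - {a}) = 1" using assms a by (simp add: sum.remove)
  then have "f a = 1" "sum f (A - {a}) = 0" using a by arith+
  then show thesis using that[OF a(1)] assms by auto
qed

lemma sum_nat_eq_2E:
  fixes f :: "'a \<Rightarrow> nat"
  assumes "finite A" "sum f A = 2"
  obtains (point) a where "a \<in> A" "\<forall>x\<in>A. f x = 2 * of_bool (x = a)"
    | (pair) S where "S \<subseteq> A" "card S = 2" "\<forall>x\<in>A. f x = of_bool (x \<in> S)"
proof -
  obtain a where a: "a \<in> A" "f a \<noteq> 0" using assms by (metis sum.neutral zero_neq_numeral)
  have sum_a: "f a + sum f (A - {a}) = 2" using assms a by (simp add: sum.remove)
  show thesis
  proof (cases "f a = 2")
    case True
    then have "sum f (A - {a}) = 0" using sum_a by simp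
    then show thesis using point[OF a(1)] True assms by auto
  next
    case False
    then have "f a = 1" "sum f (A - {a}) = 1" using sum_a a by auto
    then obtain b where "b \<in> A - {a}" "\<forall>x\<in>A - {a}. f x = of_bool (x = b)"
      using sum_nat_eq_1E[of "A - {a}" f] assms by auto
    with \<open>f a = 1\<close> a(1) show thesis
      by (intro pair[of "{a, b}"]) auto
  qed
qed

lemma ex_not_in_if_card_less:
  "finite A \<Longrightarrow> card A < card B \<Longrightarrow> \<exists>x\<in>B. x \<notin> A"
  by (meson card_mono not_le subsetI)

lemma card_nbhd_inter_singleton:
  "a \<in> V \<Longrightarrow> card (nbhd V E v \<inter> {a}) = of_bool (E v a)"
  by (auto simp: nbhd_def)

lemma card_nbhd_inter_gt_0_iff:
  assumes "finite V" "S \<subseteq> V"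
  shows "0 < card (nbhd V E v \<inter> S) \<longleftrightarrow> (\<exists>u\<in>S. E v u)"
proof -
  have "finite (nbhd V E v \<inter> S)" using assms(1) by (simp add: nbhd_def)
  then show ?thesis using assms(2) by (auto simp: card_gt_0_iff nbhd_def)
qed

definition pq_dominating_set :: "'a set \<Rightarrow> ('a \<Rightarrow> 'a \<Rightarrow> bool) \<Rightarrow> nat \<Rightarrow> nat \<Rightarrow> 'a set \<Rightarrow> bool" where
  "pq_dominating_set V E p q S \<longleftrightarrow> S \<subseteq> V \<and>
     (\<forall>v\<in>V - S. p \<le> card (nbhd V E v \<inter> S)) \<and> (\<forall>v\<in>S. q \<le> card (nbhd V E v \<inter> S))"

definition pq_domination_number :: "'a set \<Rightarrow> ('a \<Rightarrow> 'a \<Rightarrow> bool) \<Rightarrow> nat \<Rightarrow> nat \<Rightarrow> enat" where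
  "pq_domination_number V E p q = (INF S\<in>{S. pq_dominating_set V E p q S}. enat (card S))"

lemma dom_number_eq_pq_domination_number:
  assumes "finite V"
  shows "dom_number V E = pq_domination_number V E 1 0"
proof -
  have "S \<subseteq> V \<and> (\<forall>v\<in>V. v \<in> S \<or> (\<exists>u\<in>S. E v u)) \<longleftrightarrow> pq_dominating_set V E 1 0 S" for S
    by (auto simp: pq_dominating_set_def Suc_le_eq card_nbhd_inter_gt_0_iff[OF assms]; blast)
  then show ?thesis by (simp add: dom_number_def pq_domination_number_def)
qed

lemma total_dom_number_eq_pq_domination_number:
  assumes "finite V"
  shows "total_dom_number V E = pq_domination_number V E 1 1"
proof -
  have "S \<subseteq> V \<and> (\<forall>v\<in>V. \<exists>u\<in>S. E v u) \<longleftrightarrow> pq_dominating_set V E 1 1 S" for S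
    by (auto simp: pq_dominating_set_def Suc_le_eq card_nbhd_inter_gt_0_iff[OF assms]; blast)
  then show ?thesis by (simp add: total_dom_number_def pq_domination_number_def)
qed

lemma two_dom_number_eq_pq_domination_number:
  "two_dom_number V E = pq_domination_number V E 2 0"
  by (simp add: two_dom_number_def pq_domination_number_def pq_dominating_set_def)

lemma double_dom_number_eq_pq_domination_number:
  assumes "simple_graph V E"
  shows "double_dom_number V E = pq_domination_number V E 2 1"
proof -
  have "card (insert v (nbhd V E v) \<inter> S) = card (nbhd V E v \<inter> S) + of_bool (v \<in> S)"
    if "v \<in> V" for v S
  proof -
    have "finite (nbhd V E v)" "v \<notin> nbhd V E v"
      using assms by (auto simp: simple_graph_def nbhd_def)
    then show ?thesis by (cases "v \<in> S") auto
  qed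
  then have "S \<subseteq> V \<and> (\<forall>v\<in>V. 2 \<le> card (insert v (nbhd V E v) \<inter> S)) \<longleftrightarrow>
      pq_dominating_set V E 2 1 S" for S
    by (auto simp: pq_dominating_set_def)
  then show ?thesis by (simp add: double_dom_number_def pq_domination_number_def)
qed

lemma pq_dominating_set_nonempty:
  assumes "pq_dominating_set V E p q S" "1 \<le> p" "V \<noteq> {}"
  shows "S \<noteq> {}"
  using assms by (auto simp: pq_dominating_set_def)

lemma pq_domination_number_eq_1_iff:
  assumes "finite V" "V \<noteq> {}" "1 \<le> p"
  shows "pq_domination_number V E p q = 1 \<longleftrightarrow> (\<exists>a. pq_dominating_set V E p q {a})"
proof -
  have "1 \<le> card S" if "pq_dominating_set V E p q S" for S
    using pq_dominating_set_nonempty[OF that assms(3,2)] that assms(1)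
    by (auto simp: Suc_le_eq card_gt_0_iff pq_dominating_set_def intro: finite_subset)
  then show ?thesis
    using INF_enat_eq_iff[of card "{S. pq_dominating_set V E p q S}" 1]
    by (auto simp: pq_domination_number_def one_enat_def card_1_singleton_iff)
qed

lemma pq_domination_number_eq_2_iff:
  assumes "finite V" "V \<noteq> {}" "1 \<le> p"
  shows "pq_domination_number V E p q = 2 \<longleftrightarrow>
    (\<exists>S. pq_dominating_set V E p q S \<and> card S = 2) \<and> (\<nexists>a. pq_dominating_set V E p q {a})"
proof -
  have "2 \<le> card S \<longleftrightarrow> (\<nexists>a. S = {a})" if "pq_dominating_set V E p q S" for S
  proof -
    have "finite S" "S \<noteq> {}"
      using pq_dominating_set_nonempty[OF that assms(3,2)] that assms(1)
      by (auto simp: pq_dominating_set_def intro: finite_subset)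
    then have "card S \<noteq> 0" by simp
    then show ?thesis unfolding card_1_singleton_iff[symmetric] by linarith
  qed
  then show ?thesis
    using INF_enat_eq_iff[of card "{S. pq_dominating_set V E p q S}" 2]
    by (auto simp: pq_domination_number_def numeral_eq_enat)
qed

lemma pq_dominating_set_bounds:
  assumes "simple_graph V E" "pq_dominating_set V E p q S" "S \<noteq> {}" "card S < card V"
  shows "p \<le> card S" "q < card S"
proof -
  have "S \<subseteq> V" using assms(2) by (simp add: pq_dominating_set_def)
  then have "finite S" using assms(1) by (auto simp: simple_graph_def intro: finite_subset)
  obtain v where "v \<in> V" "v \<notin> S" using ex_not_in_if_card_less[OF \<open>finite S\<close> assms(4)] by blast
  then have "p \<le> card (nbhd V E v \<inter> S)" using assms(2) by (simp add: pq_dominating_set_def)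
  also have "\<dots> \<le> card S" using \<open>finite S\<close> by (intro card_mono) auto
  finally show "p \<le> card S" .
  obtain a where "a \<in> S" using assms(3) by blast
  then have "q \<le> card (nbhd V E a \<inter> S)" using assms(2) by (simp add: pq_dominating_set_def)
  also have "\<dots> \<le> card (S - {a})"
    using assms(1) \<open>finite S\<close> by (intro card_mono) (auto simp: simple_graph_def nbhd_def)
  also have "\<dots> < card S" using \<open>finite S\<close> \<open>a \<in> S\<close> by (meson card_Diff1_less)
  finally show "q < card S" .
qed

lemma ex_pq_dominating_singleton_iff:
  assumes "simple_graph V E" "2 \<le> card V" "1 \<le> p"
  shows "(\<exists>a. pq_dominating_set V E p q {a}) \<longleftrightarrow>
    p = 1 \<and> q = 0 \<and> (\<exists>a. pq_dominating_set V E 1 0 {a})"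
proof
  assume "\<exists>a. pq_dominating_set V E p q {a}"
  then obtain a where a: "pq_dominating_set V E p q {a}" ..
  then have "p \<le> 1" "q < 1" using pq_dominating_set_bounds[OF assms(1) a] assms(2) by auto
  with a assms(3) show "p = 1 \<and> q = 0 \<and> (\<exists>a. pq_dominating_set V E 1 0 {a})" by auto
qed auto

lemma w_dominating_cong:
  assumes "\<And>v. v \<in> V \<Longrightarrow> f v = g v"
  shows "w_dominating V E w f \<longleftrightarrow> w_dominating V E w g"
proof -
  have "(\<Sum>u\<in>nbhd V E v. f u) = (\<Sum>u\<in>nbhd V E v. g u)" for v
    by (rule sum.cong) (auto simp: nbhd_def assms)
  then show ?thesis by (simp add: w_dominating_def assms)
qed

lemma w_dominating_indicator_iff:
  assumes "finite V" "S \<subseteq> V" "S \<noteq> {}"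
  shows "w_dominating V E w (\<lambda>x. of_bool (x \<in> S)) \<longleftrightarrow>
    1 < length w \<and> pq_dominating_set V E (w ! 0) (w ! 1) S"
proof -
  have "finite (nbhd V E v)" for v using assms(1) by (simp add: nbhd_def)
  then show ?thesis using assms(2,3)
    by (auto simp: w_dominating_def pq_dominating_set_def)
qed

lemma w_dominating_weight_nonzero:
  assumes "finite V" "V \<noteq> {}" "1 \<le> w ! 0" "w_dominating V E w f"
  shows "sum f V \<noteq> 0"
proof
  assume "sum f V = 0"
  then have zero: "\<forall>v\<in>V. f v = 0" using assms(1) by simp
  obtain v where "v \<in> V" using assms(2) by blast
  have "w ! f v \<le> (\<Sum>u\<in>nbhd V E v. f u)" using assms(4) \<open>v \<in> V\<close> by (simp add: w_dominating_def)
  also have "\<dots> = 0" using zero by (simp add: nbhd_def)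
  finally show False using zero \<open>v \<in> V\<close> assms(3) by simp
qed

lemma ex_w_dominating_weight_1_iff:
  assumes "finite V"
  shows "(\<exists>f. w_dominating V E w f \<and> sum f V = 1) \<longleftrightarrow>
    1 < length w \<and> (\<exists>a. pq_dominating_set V E (w ! 0) (w ! 1) {a})"
proof
  assume "\<exists>f. w_dominating V E w f \<and> sum f V = 1"
  then obtain f where f: "w_dominating V E w f" "sum f V = 1" by blast
  then obtain a where "a \<in> V" "\<forall>x\<in>V. f x = of_bool (x \<in> {a})"
    using sum_nat_eq_1E[OF assms f(2)] by auto
  then have "w_dominating V E w (\<lambda>x. of_bool (x \<in> {a}))"
    using f(1) w_dominating_cong[of V f] by simp
  with \<open>a \<in> V\<close> show "1 < length w \<and> (\<exists>a. pq_dominating_set V E (w ! 0) (w ! 1) {a})"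
    using w_dominating_indicator_iff[OF assms] by blast
next
  assume "1 < length w \<and> (\<exists>a. pq_dominating_set V E (w ! 0) (w ! 1) {a})"
  then obtain a where "1 < length w" "pq_dominating_set V E (w ! 0) (w ! 1) {a}" by blast
  moreover have "a \<in> V" using calculation(2) by (simp add: pq_dominating_set_def)
  ultimately have "w_dominating V E w (\<lambda>x. of_bool (x \<in> {a}))"
    using w_dominating_indicator_iff[OF assms] by blast
  moreover have "(\<Sum>x\<in>V. of_bool (x \<in> {a})) = (1::nat)" using assms \<open>a \<in> V\<close> by simp
  ultimately show "\<exists>f. w_dominating V E w f \<and> sum f V = 1" by blast
qed

lemma ex_w_dominating_weight_2_iff:
  assumes "finite V"
  shows "(\<exists>f. w_dominating V E w f \<and> sum f V = 2) \<longleftrightarrow>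
    (\<exists>a\<in>V. w_dominating V E w (\<lambda>x. 2 * of_bool (x = a))) \<or>
    1 < length w \<and> (\<exists>S. pq_dominating_set V E (w ! 0) (w ! 1) S \<and> card S = 2)"
proof
  assume "\<exists>f. w_dominating V E w f \<and> sum f V = 2"
  then obtain f where f: "w_dominating V E w f" "sum f V = 2" by blast
  from assms f(2) show "(\<exists>a\<in>V. w_dominating V E w (\<lambda>x. 2 * of_bool (x = a))) \<or>
    1 < length w \<and> (\<exists>S. pq_dominating_set V E (w ! 0) (w ! 1) S \<and> card S = 2)"
  proof (cases rule: sum_nat_eq_2E)
    case (point a)
    then show ?thesis using f(1) w_dominating_cong[of V f] by auto
  next
    case (pair S)
    then have "w_dominating V E w (\<lambda>x. of_bool (x \<in> S))" using f(1) w_dominating_cong[of V f] by simp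
    moreover have "S \<noteq> {}" using \<open>card S = 2\<close> by auto
    ultimately show ?thesis using pair w_dominating_indicator_iff[OF assms \<open>S \<subseteq> V\<close>] by blast
  qed
next
  assume "(\<exists>a\<in>V. w_dominating V E w (\<lambda>x. 2 * of_bool (x = a))) \<or>
    1 < length w \<and> (\<exists>S. pq_dominating_set V E (w ! 0) (w ! 1) S \<and> card S = 2)"
  then show "\<exists>f. w_dominating V E w f \<and> sum f V = 2"
  proof (elim disjE conjE exE bexE)
    fix a assume "a \<in> V" "w_dominating V E w (\<lambda>x. 2 * of_bool (x = a))"
    moreover have "(\<Sum>x\<in>V. 2 * of_bool (x = a)) = (2::nat)" using assms \<open>a \<in> V\<close> by simp
    ultimately show ?thesis by blast
  next
    fix S assume "1 < length w" "pq_dominating_set V E (w ! 0) (w ! 1) S" "card S = 2"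
    moreover have "S \<subseteq> V" using calculation(2) by (simp add: pq_dominating_set_def)
    moreover have "S \<noteq> {}" using \<open>card S = 2\<close> by auto
    ultimately have "w_dominating V E w (\<lambda>x. of_bool (x \<in> S))"
      using w_dominating_indicator_iff[OF assms] by blast
    moreover have "(\<Sum>x\<in>V. of_bool (x \<in> S)) = (2::nat)"
      using assms \<open>S \<subseteq> V\<close> \<open>card S = 2\<close> by (simp add: Int_absorb1)
    ultimately show ?thesis by blast
  qed
qed

lemma ex_w_dominating_point_iff:
  assumes "simple_graph V E" "2 \<le> card V" "1 \<le> w ! 0"
  shows "(\<exists>a\<in>V. w_dominating V E w (\<lambda>x. k * of_bool (x = a))) \<longleftrightarrow>
    k < length w \<and> w ! k = 0 \<and> w ! 0 \<le> k \<and> (\<exists>a. pq_dominating_set V E 1 0 {a})"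
proof -
  have "finite V" "\<And>a. \<not> E a a" using assms(1) by (auto simp: simple_graph_def)
  have "w_dominating V E w (\<lambda>x. k * of_bool (x = a)) \<longleftrightarrow>
      k < length w \<and> w ! k = 0 \<and> w ! 0 \<le> k \<and> pq_dominating_set V E 1 0 {a}" if "a \<in> V" for a
  proof -
    obtain b where b: "b \<in> V" "b \<notin> {a}"
      using ex_not_in_if_card_less[of "{a}" V] assms(2) by auto
    have nbhd_sum: "(\<Sum>u\<in>nbhd V E v. k * of_bool (u = a)) = k * of_bool (E v a)" for v
      using \<open>finite V\<close> that by (simp add: nbhd_def)
    have "w_dominating V E w (\<lambda>x. k * of_bool (x = a)) \<longleftrightarrow>
        k < length w \<and> w ! k = 0 \<and> (\<forall>v\<in>V - {a}. w ! 0 \<le> k * of_bool (E v a))"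
      using that \<open>\<not> E a a\<close> by (auto simp: w_dominating_def nbhd_sum)
    also have "(\<forall>v\<in>V - {a}. w ! 0 \<le> k * of_bool (E v a)) \<longleftrightarrow> w ! 0 \<le> k \<and> (\<forall>v\<in>V - {a}. E v a)"
      using b assms(3) by (auto simp: of_bool_def split: if_splits)
    also have "(\<forall>v\<in>V - {a}. E v a) \<longleftrightarrow> pq_dominating_set V E 1 0 {a}"
      using that by (simp add: pq_dominating_set_def card_nbhd_inter_singleton)
    finally show ?thesis .
  qed
  moreover have "pq_dominating_set V E 1 0 {a} \<Longrightarrow> a \<in> V" for a
    by (simp add: pq_dominating_set_def)
  ultimately show ?thesis by blast
qed

lemma gamma_w_eq_2_iff:
  assumes "finite V" "V \<noteq> {}" "1 \<le> w ! 0"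
  shows "gamma_w V E w = 2 \<longleftrightarrow>
    (\<exists>f. w_dominating V E w f \<and> sum f V = 2) \<and> \<not> (\<exists>f. w_dominating V E w f \<and> sum f V = 1)"
proof -
  have "2 \<le> sum f V \<longleftrightarrow> sum f V \<noteq> 1" if "w_dominating V E w f" for f
    using w_dominating_weight_nonzero[OF assms that] by linarith
  then show ?thesis
    using INF_enat_eq_iff[of "\<lambda>f. sum f V" "{f. w_dominating V E w f}" 2]
    by (auto simp: gamma_w_def numeral_eq_enat)
qed

theorem theorem12:
  fixes V :: "'a set" and E :: "'a \<Rightarrow> 'a \<Rightarrow> bool" and w :: "nat list"
  assumes "simple_graph V E"
    and "card V \<ge> 3"
    and "w \<noteq> []"
    and "w ! 0 \<ge> 1"
    and "\<forall>i j. i \<le> j \<longrightarrow> j < length w \<longrightarrow> w ! j \<le> w ! i"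
  shows "gamma_w V E w = 2 \<longleftrightarrow>
     (length w \<ge> 3 \<and> w ! 2 = 0 \<and> dom_number V E = 1 \<and> (w ! 0 = 2 \<or> (w ! 0 = 1 \<and> w ! 1 = 1))) \<or>
     (length w \<ge> 2 \<and> w ! 0 = 1 \<and> w ! 1 = 0 \<and> dom_number V E = 2) \<or>
     (length w \<ge> 2 \<and> w ! 0 = 1 \<and> w ! 1 = 1 \<and> total_dom_number V E = 2) \<or>
     (length w \<ge> 2 \<and> w ! 0 = 2 \<and> w ! 1 = 0 \<and> two_dom_number V E = 2) \<or>
     (length w \<ge> 2 \<and> w ! 0 = 2 \<and> w ! 1 = 1 \<and> double_dom_number V E = 2)"
proof -
  have fin: "finite V" using assms(1) by (simp add: simple_graph_def)
  have ne: "V \<noteq> {}" and card2: "2 \<le> card V" using assms(2) by auto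
  have w1_le_w0: "1 < length w \<Longrightarrow> w ! 1 \<le> w ! 0" using assms(5) by auto
  \<comment> \<open>Naming the two existential statements keeps the final case distinction propositional.\<close>
  define universal_vertex where "universal_vertex \<longleftrightarrow> (\<exists>a. pq_dominating_set V E 1 0 {a})"
  define pq_pair where "pq_pair p q \<longleftrightarrow> (\<exists>S. pq_dominating_set V E p q S \<and> card S = 2)" for p q
  note singleton = ex_pq_dominating_singleton_iff[OF assms(1) card2, folded universal_vertex_def]
  have pair_bounds: "pq_pair (w ! 0) (w ! 1) \<Longrightarrow> w ! 0 \<le> 2 \<and> w ! 1 \<le> 1"
    unfolding pq_pair_def using pq_dominating_set_bounds[OF assms(1), of "w ! 0" "w ! 1"] assms(2)
    by force
  consider "w ! 0 = 1" "w ! 1 = 0" | "w ! 0 = 1" "w ! 1 = 1" | "w ! 0 = 2" "w ! 1 = 0"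
    | "w ! 0 = 2" "w ! 1 \<ge> 1" | "w ! 0 \<ge> 3" | "length w < 2"
    using assms(4) w1_le_w0 by fastforce
  then show ?thesis
    unfolding gamma_w_eq_2_iff[OF fin ne assms(4)]
      ex_w_dominating_weight_1_iff[OF fin] ex_w_dominating_weight_2_iff[OF fin]
      ex_w_dominating_point_iff[OF assms(1) card2 assms(4), folded universal_vertex_def]
      singleton[OF assms(4)] pq_pair_def[symmetric]
      dom_number_eq_pq_domination_number[OF fin] total_dom_number_eq_pq_domination_number[OF fin]
      two_dom_number_eq_pq_domination_number double_dom_number_eq_pq_domination_number[OF assms(1)]
    using w1_le_w0 pair_bounds
    by cases (auto simp: pq_domination_number_eq_1_iff[OF fin ne]
        pq_domination_number_eq_2_iff[OF fin ne] singleton pq_pair_def[symmetric])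
qed

end
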